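(* Let $\beta\in(0,1/2)$, $N=2^n$, $\delta_N=2^{-N^\beta}$. Let $(U,V,X,Z)$ be random variables with $U,V\in\{0,1\}$ and $X,Z$ taking values in finite alphabets $\mathcal X,\mathcal Z$, and let $P=P_{U^NV^NX^NZ^N}$ be the distribution of $N$ i.i.d. copies of $(U,V,X,Z)$. Put $T^N=V^NG_N$ and $$\mathcal H_{V|U,Z}=\{i\in[N]:\ Z(T_i\mid T^{i-1},U^N,Z^N)\ge 1-\delta_N\},$$ computed under $P$. Let $Q$ be any distribution on $\{0,1\}^N\times\{0,1\}^N\times\mathcal X^N\times\mathcal Z^N$ of $(U^N,V^N,X^N,Z^N)$ with $\|P-Q\|_1\le 2N2^{-N^\beta}$, and under $Q$ set $T^N=V^NG_N$. Let $\mathcal I\subseteq\mathcal H_{V|U,Z}$ and $\mathcal A\subseteq\mathcal I$, and write $T[\mathcal S]=(T_i)_{i\in\mathcal S}$. Then, with mutual information computed under $Q$, $$I\big(T[\mathcal I\setminus\mathcal A];\,T[\mathcal A],U^N,Z^N\big)=O\big(N^3 2^{-N^\beta}\big),$$ with implied constant depending only on $|\mathcal Z|$ (for all sufficiently large $N$).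
   Context: $G_N=B_NF^{\otimes n}$ is Arıkan's polarizing matrix over $\mathbb F_2$: $F=\begin{pmatrix}1&0\\1&1\end{pmatrix}$, $\otimes$ is the Kronecker product and $B_N$ is the bit-reversal permutation matrix. For a binary random variable $A$ and a discrete random variable $B$, $Z(A\mid B)=2\sum_b P_B(b)\sqrt{P_{A|B}(0|b)P_{A|B}(1|b)}$. $T^{i-1}=(T_1,\dots,T_{i-1})$, $[N]=\{1,\dots,N\}$, $\|\cdot\|_1$ is the $\ell_1$ distance between distributions, logarithms are base 2. *)

theory Defs
  imports Complex_Main "HOL-Library.FuncSet"
begin

section \<open>Arikan's polarizing matrix over F_2 (bool: False = 0, True = 1, \<and> = product)\<close>

text \<open>Matrices are boolean functions on index pairs (0-indexed).\<close>

definition arikanF :: "nat \<Rightarrow> nat \<Rightarrow> bool" where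
  "arikanF i j = ((i, j) \<in> {(0,0), (1,0), (1,1)})"

definition kron2 :: "nat \<Rightarrow> (nat \<Rightarrow> nat \<Rightarrow> bool) \<Rightarrow> (nat \<Rightarrow> nat \<Rightarrow> bool) \<Rightarrow> nat \<Rightarrow> nat \<Rightarrow> bool" where
  "kron2 m A B i j = (A (i div m) (j div m) \<and> B (i mod m) (j mod m))"

fun Fpow :: "nat \<Rightarrow> nat \<Rightarrow> nat \<Rightarrow> bool" where
  "Fpow 0 = (\<lambda>i j. True)"
| "Fpow (Suc n) = kron2 (2 ^ n) arikanF (Fpow n)"

definition bitrev :: "nat \<Rightarrow> nat \<Rightarrow> nat" where
  "bitrev n i = (\<Sum>k<n. if odd (i div 2 ^ k) then 2 ^ (n - 1 - k) else 0)"

definition Bperm :: "nat \<Rightarrow> nat \<Rightarrow> nat \<Rightarrow> bool" where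
  "Bperm n i j = (j = bitrev n i)"

text \<open>G_N = B_N F^{\<otimes>n}, product over F_2.\<close>
definition GN :: "nat \<Rightarrow> nat \<Rightarrow> nat \<Rightarrow> bool" where
  "GN n i j = odd (card {k. k < 2 ^ n \<and> Bperm n i k \<and> Fpow n k j})"

text \<open>Row vector times G_N over F_2: T = v G_N, component j.\<close>
definition polar :: "nat \<Rightarrow> bool list \<Rightarrow> nat \<Rightarrow> bool" where
  "polar n v j = odd (card {i. i < 2 ^ n \<and> v ! i \<and> GN n i j})"

definition prb :: "('o \<Rightarrow> real) \<Rightarrow> 'o set \<Rightarrow> ('o \<Rightarrow> bool) \<Rightarrow> real" where
  "prb Q S E = (\<Sum>\<omega>\<in>{\<omega>\<in>S. E \<omega>}. Q \<omega>)"

definition bhatt :: "('o \<Rightarrow> real) \<Rightarrow> 'o set \<Rightarrow> ('o \<Rightarrow> bool) \<Rightarrow> ('o \<Rightarrow> 'b) \<Rightarrow> real" where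
  "bhatt Q S A B = 2 * (\<Sum>b\<in>B ` S.
      prb Q S (\<lambda>\<omega>. B \<omega> = b) *
      sqrt ((prb Q S (\<lambda>\<omega>. A \<omega> = False \<and> B \<omega> = b) / prb Q S (\<lambda>\<omega>. B \<omega> = b)) *
            (prb Q S (\<lambda>\<omega>. A \<omega> = True \<and> B \<omega> = b) / prb Q S (\<lambda>\<omega>. B \<omega> = b))))"

text \<open>Mutual information (base 2; terms with zero joint mass contribute 0).\<close>
definition mutinf :: "('o \<Rightarrow> real) \<Rightarrow> 'o set \<Rightarrow> ('o \<Rightarrow> 'a) \<Rightarrow> ('o \<Rightarrow> 'b) \<Rightarrow> real" where
  "mutinf Q S A B = (\<Sum>a\<in>A ` S. \<Sum>b\<in>B ` S.
      prb Q S (\<lambda>\<omega>. A \<omega> = a \<and> B \<omega> = b) *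
      log 2 (prb Q S (\<lambda>\<omega>. A \<omega> = a \<and> B \<omega> = b) /
             (prb Q S (\<lambda>\<omega>. A \<omega> = a) * prb Q S (\<lambda>\<omega>. B \<omega> = b))))"

text \<open>Outcomes: length-N words over the alphabet bool x bool x X x Z
  (equivalently the tuple (U^N, V^N, X^N, Z^N)).\<close>
definition outcomes :: "nat \<Rightarrow> 'x set \<Rightarrow> 'z set \<Rightarrow> (bool \<times> bool \<times> 'x \<times> 'z) list set" where
  "outcomes N X Z = {\<omega>. length \<omega> = N \<and> set \<omega> \<subseteq> UNIV \<times> UNIV \<times> X \<times> Z}"

definition iid :: "('o \<Rightarrow> real) \<Rightarrow> 'o list \<Rightarrow> real" where
  "iid p \<omega> = prod_list (map p \<omega>)"

definition Uv :: "(bool \<times> bool \<times> 'x \<times> 'z) list \<Rightarrow> bool list" where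
  "Uv \<omega> = map fst \<omega>"
definition Vv :: "(bool \<times> bool \<times> 'x \<times> 'z) list \<Rightarrow> bool list" where
  "Vv \<omega> = map (\<lambda>(u, v, x, z). v) \<omega>"
definition Zv :: "(bool \<times> bool \<times> 'x \<times> 'z) list \<Rightarrow> 'z list" where
  "Zv \<omega> = map (\<lambda>(u, v, x, z). z) \<omega>"

definition Tv :: "nat \<Rightarrow> (bool \<times> bool \<times> 'x \<times> 'z) list \<Rightarrow> nat \<Rightarrow> bool" where
  "Tv n \<omega> = polar n (Vv \<omega>)"

text \<open>The set H_{V|U,Z} (0-indexed: index i corresponds to i+1 in [N];
  T^{i-1} becomes the prefix T_0..T_{i-1}).\<close>
definition Hset :: "real \<Rightarrow> nat \<Rightarrow> (bool \<times> bool \<times> 'x \<times> 'z \<Rightarrow> real) \<Rightarrow> 'x set \<Rightarrow> 'z set \<Rightarrow> nat set" where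
  "Hset \<beta> n p X Z = {i. i < 2 ^ n \<and>
     bhatt (iid p) (outcomes (2 ^ n) X Z) (\<lambda>\<omega>. Tv n \<omega> i)
        (\<lambda>\<omega>. (map (Tv n \<omega>) [0..<i], Uv \<omega>, Zv \<omega>))
     \<ge> 1 - 2 powr (- (real (2 ^ n) powr \<beta>))}"

end

theory Submission
  imports Defs
begin

(*
  Write N = 2^n, delta = 2 powr -(N powr beta), B = (U^N, Z^N) and R = T[I].

  (1) Under the i.i.d. law P, every index of I is almost uniform given its past:
      Z(T_i | T^{i-1}, B) >= 1 - delta gives H(T_i | T^{i-1}, B) >= 1 - 4 delta, and the
      chain rule together with "conditioning reduces entropy" yields
      H_P(R | B) >= |I| (1 - 4 delta).
  (2) Conditional entropy is continuous in total variation: splitting P and Q into the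
      common part min(P,Q) plus remainders of mass eps = ||P - Q||_1 / 2, concavity and a
      mixing bound give H_P(R | B) <= H_Q(R | B) + eps |I| + h(eps), h the binary entropy.
  (3) Under Q, I(T[I-A]; T[A], B) = H(T[I-A]) + H(T[A] | B) - H(R | B) <= |I| - H_Q(R | B).
  Combining, with eps <= N delta, the mutual information is at most 10 N^3 delta, so the
  constant 10 works for every alphabet size and every N.
*)

definition law :: "('o \<Rightarrow> real) \<Rightarrow> 'o set \<Rightarrow> ('o \<Rightarrow> 'a) \<Rightarrow> 'a \<Rightarrow> real" where
  "law \<mu> S V v = prb \<mu> S (\<lambda>\<omega>. V \<omega> = v)"

lemma sum_by_law:
  assumes "finite S"
  shows "(\<Sum>\<omega>\<in>S. \<mu> \<omega> * G (V \<omega>)) = (\<Sum>v\<in>V ` S. law \<mu> S V v * G v)"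
proof -
  have "(\<Sum>\<omega>\<in>S. \<mu> \<omega> * G (V \<omega>)) = (\<Sum>v\<in>V ` S. \<Sum>\<omega>\<in>{\<omega>\<in>S. V \<omega> = v}. \<mu> \<omega> * G (V \<omega>))"
    by (rule sum.image_gen[OF assms])
  also have "\<dots> = (\<Sum>v\<in>V ` S. \<Sum>\<omega>\<in>{\<omega>\<in>S. V \<omega> = v}. \<mu> \<omega> * G v)"
    by (intro sum.cong) auto
  also have "\<dots> = (\<Sum>v\<in>V ` S. law \<mu> S V v * G v)"
    by (simp add: law_def prb_def sum_distrib_right)
  finally show ?thesis .
qed

lemma sum_law: "finite S \<Longrightarrow> (\<Sum>v\<in>V ` S. law \<mu> S V v) = (\<Sum>\<omega>\<in>S. \<mu> \<omega>)"
  using sum_by_law[of S \<mu> "\<lambda>_. 1" V] by simp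

lemma prb_nonneg: "\<forall>\<omega>\<in>S. 0 \<le> \<mu> \<omega> \<Longrightarrow> 0 \<le> prb \<mu> S P"
  unfolding prb_def by (rule sum_nonneg) auto

lemma prb_cong: "(\<And>\<omega>. \<omega> \<in> S \<Longrightarrow> P \<omega> = P' \<omega>) \<Longrightarrow> prb \<mu> S P = prb \<mu> S P'"
  unfolding prb_def by (rule sum.cong) auto

lemma prb_mono:
  "finite S \<Longrightarrow> \<forall>\<omega>\<in>S. 0 \<le> \<mu> \<omega> \<Longrightarrow> (\<And>\<omega>. \<omega> \<in> S \<Longrightarrow> P \<omega> \<Longrightarrow> P' \<omega>) \<Longrightarrow> prb \<mu> S P \<le> prb \<mu> S P'"
  unfolding prb_def by (rule sum_mono2) auto

lemma law_nonneg: "\<forall>\<omega>\<in>S. 0 \<le> \<mu> \<omega> \<Longrightarrow> 0 \<le> law \<mu> S V v"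
  unfolding law_def by (rule prb_nonneg)

lemma law_pos:
  assumes "finite S" "\<forall>\<omega>\<in>S. 0 \<le> \<mu> \<omega>" "\<omega> \<in> S" "0 < \<mu> \<omega>"
  shows "0 < law \<mu> S V (V \<omega>)"
proof -
  have "\<mu> \<omega> \<le> law \<mu> S V (V \<omega>)"
    unfolding law_def prb_def using assms(1-3) by (intro member_le_sum) auto
  then show ?thesis using assms(4) by linarith
qed

lemma law_outside_range: "v \<notin> V ` S \<Longrightarrow> law \<mu> S V v = 0"
  unfolding law_def prb_def by (rule sum.neutral) auto

lemma law_le_law_of_function:
  assumes "finite S" "\<forall>\<omega>\<in>S. 0 \<le> \<mu> \<omega>" "\<forall>\<omega>\<in>S. Y \<omega> = f (Y' \<omega>)"
  shows "law \<mu> S Y' y' \<le> law \<mu> S Y (f y')"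
  unfolding law_def by (rule prb_mono[OF assms(1,2)]) (use assms(3) in auto)

lemma law_pair_le:
  "finite S \<Longrightarrow> \<forall>\<omega>\<in>S. 0 \<le> \<mu> \<omega> \<Longrightarrow> law \<mu> S (\<lambda>\<omega>. (X \<omega>, Y \<omega>)) (x, y) \<le> law \<mu> S Y y"
  unfolding law_def by (rule prb_mono) auto

lemma law_marginal:
  assumes "finite S"
  shows "(\<Sum>x\<in>X ` S. law \<mu> S (\<lambda>\<omega>. (X \<omega>, Y \<omega>)) (x, y)) = law \<mu> S Y y"
proof -
  have "(\<Sum>x\<in>X ` S. \<Sum>\<omega>\<in>{\<omega>. \<omega> \<in> {\<omega>\<in>S. Y \<omega> = y} \<and> X \<omega> = x}. \<mu> \<omega>) = (\<Sum>\<omega>\<in>{\<omega>\<in>S. Y \<omega> = y}. \<mu> \<omega>)"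
    by (rule sum.group) (use assms in auto)
  moreover have "{\<omega>. \<omega> \<in> {\<omega>\<in>S. Y \<omega> = y} \<and> X \<omega> = x} = {\<omega>\<in>S. (X \<omega>, Y \<omega>) = (x, y)}" for x
    by auto
  ultimately show ?thesis by (simp add: law_def prb_def)
qed

lemma law_mono_measure:
  "\<forall>\<omega>\<in>S. \<nu> \<omega> \<le> \<mu> \<omega> \<Longrightarrow> law \<nu> S V v \<le> law \<mu> S V v"
  unfolding law_def prb_def by (rule sum_mono) auto

text \<open>The basic tool behind every entropy inequality below: if \<open>\<Sum> \<mu>/F \<le> \<Sum> \<mu>\<close>
  then \<open>\<Sum> \<mu> log F \<ge> 0\<close>; it follows from \<open>ln x \<ge> 1 - 1/x\<close>.\<close>
lemma gibbs:
  assumes fS: "finite S" and nn: "\<forall>\<omega>\<in>S. 0 \<le> \<mu> \<omega>"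
    and pos: "\<And>\<omega>. \<omega> \<in> S \<Longrightarrow> 0 < \<mu> \<omega> \<Longrightarrow> 0 < F \<omega>"
    and le: "(\<Sum>\<omega>\<in>S. \<mu> \<omega> / F \<omega>) \<le> (\<Sum>\<omega>\<in>S. \<mu> \<omega>)"
  shows "0 \<le> (\<Sum>\<omega>\<in>S. \<mu> \<omega> * log 2 (F \<omega>))"
proof -
  have "\<mu> \<omega> - \<mu> \<omega> / F \<omega> \<le> \<mu> \<omega> * ln (F \<omega>)" if "\<omega> \<in> S" for \<omega>
  proof (cases "\<mu> \<omega> = 0")
    case False
    then have m: "0 < \<mu> \<omega>" using nn that by force
    then have F: "0 < F \<omega>" using pos that by blast
    have "ln (1 / F \<omega>) \<le> 1 / F \<omega> - 1" using F by (intro ln_le_minus_one) simp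
    then have "1 - 1 / F \<omega> \<le> ln (F \<omega>)" using F by (simp add: ln_div)
    from mult_left_mono[OF this] m show ?thesis by (simp add: algebra_simps)
  qed simp
  then have "(\<Sum>\<omega>\<in>S. \<mu> \<omega> - \<mu> \<omega> / F \<omega>) \<le> (\<Sum>\<omega>\<in>S. \<mu> \<omega> * ln (F \<omega>))"
    by (rule sum_mono)
  then have "0 \<le> (\<Sum>\<omega>\<in>S. \<mu> \<omega> * ln (F \<omega>)) / ln 2"
    using le by (simp add: sum_subtractf)
  then show ?thesis by (simp add: log_def sum_divide_distrib)
qed

section \<open>Conditional entropy of finite measures\<close>

definition cross_ent :: "('o \<Rightarrow> real) \<Rightarrow> ('o \<Rightarrow> real) \<Rightarrow> 'o set \<Rightarrow> ('o \<Rightarrow> 'a) \<Rightarrow> ('o \<Rightarrow> 'b) \<Rightarrow> real" where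
  "cross_ent \<nu> \<mu> S X Y =
     (\<Sum>\<omega>\<in>S. \<nu> \<omega> * log 2 (law \<mu> S Y (Y \<omega>) / law \<mu> S (\<lambda>\<omega>. (X \<omega>, Y \<omega>)) (X \<omega>, Y \<omega>)))"

text \<open>Conditional entropy \<open>H(X | Y)\<close> (in bits) under the (not necessarily normalised) mass \<open>\<mu>\<close>.\<close>
definition cond_ent :: "('o \<Rightarrow> real) \<Rightarrow> 'o set \<Rightarrow> ('o \<Rightarrow> 'a) \<Rightarrow> ('o \<Rightarrow> 'b) \<Rightarrow> real" where
  "cond_ent \<mu> S X Y = cross_ent \<mu> \<mu> S X Y"

text \<open>Conditional entropy is nonnegative, since a joint law never exceeds a marginal one.\<close>
lemma cond_ent_nonneg:
  assumes fS: "finite S" and nn: "\<forall>\<omega>\<in>S. 0 \<le> \<mu> \<omega>"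
  shows "0 \<le> cond_ent \<mu> S X Y"
  unfolding cond_ent_def cross_ent_def
proof (rule sum_nonneg)
  fix \<omega> assume w: "\<omega> \<in> S"
  show "0 \<le> \<mu> \<omega> * log 2 (law \<mu> S Y (Y \<omega>) / law \<mu> S (\<lambda>\<omega>. (X \<omega>, Y \<omega>)) (X \<omega>, Y \<omega>))"
  proof (cases "\<mu> \<omega> = 0")
    case False
    then have m: "0 < \<mu> \<omega>" using nn w by fastforce
    have "0 < law \<mu> S (\<lambda>\<omega>. (X \<omega>, Y \<omega>)) (X \<omega>, Y \<omega>)"
      using law_pos[OF fS nn w m, of "\<lambda>\<omega>. (X \<omega>, Y \<omega>)"] by simp
    with law_pair_le[OF fS nn, of X Y "X \<omega>" "Y \<omega>"] m show ?thesis by simp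
  qed simp
qed

lemma cond_ent_cong:
  assumes "\<forall>\<omega>\<in>S. \<forall>\<omega>'\<in>S. (X \<omega>' = X \<omega>) = (X' \<omega>' = X' \<omega>)"
  shows "cond_ent \<mu> S X Y = cond_ent \<mu> S X' Y"
  unfolding cond_ent_def cross_ent_def
proof (intro sum.cong refl)
  fix \<omega> assume "\<omega> \<in> S"
  then have "law \<mu> S (\<lambda>\<omega>. (X \<omega>, Y \<omega>)) (X \<omega>, Y \<omega>) = law \<mu> S (\<lambda>\<omega>. (X' \<omega>, Y \<omega>)) (X' \<omega>, Y \<omega>)"
    unfolding law_def by (intro prb_cong) (use assms in auto)
  then show "\<mu> \<omega> * log 2 (law \<mu> S Y (Y \<omega>) / law \<mu> S (\<lambda>\<omega>. (X \<omega>, Y \<omega>)) (X \<omega>, Y \<omega>)) =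
    \<mu> \<omega> * log 2 (law \<mu> S Y (Y \<omega>) / law \<mu> S (\<lambda>\<omega>. (X' \<omega>, Y \<omega>)) (X' \<omega>, Y \<omega>))" by simp
qed

lemma cond_ent_chain:
  assumes fS: "finite S" and nn: "\<forall>\<omega>\<in>S. 0 \<le> \<mu> \<omega>"
  shows "cond_ent \<mu> S (\<lambda>\<omega>. (X1 \<omega>, X2 \<omega>)) Y = cond_ent \<mu> S X2 Y + cond_ent \<mu> S X1 (\<lambda>\<omega>. (X2 \<omega>, Y \<omega>))"
  unfolding cond_ent_def cross_ent_def sum.distrib[symmetric]
proof (intro sum.cong refl)
  fix \<omega> assume w: "\<omega> \<in> S"
  define A where "A = law \<mu> S (\<lambda>\<omega>. ((X1 \<omega>, X2 \<omega>), Y \<omega>)) ((X1 \<omega>, X2 \<omega>), Y \<omega>)"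
  define B where "B = law \<mu> S (\<lambda>\<omega>. (X2 \<omega>, Y \<omega>)) (X2 \<omega>, Y \<omega>)"
  have AC: "A = law \<mu> S (\<lambda>\<omega>. (X1 \<omega>, X2 \<omega>, Y \<omega>)) (X1 \<omega>, X2 \<omega>, Y \<omega>)"
    unfolding A_def law_def by (rule prb_cong) auto
  show "\<mu> \<omega> * log 2 (law \<mu> S Y (Y \<omega>) / A) =
     \<mu> \<omega> * log 2 (law \<mu> S Y (Y \<omega>) / B) +
     \<mu> \<omega> * log 2 (B / law \<mu> S (\<lambda>\<omega>. (X1 \<omega>, X2 \<omega>, Y \<omega>)) (X1 \<omega>, X2 \<omega>, Y \<omega>))"
  proof (cases "\<mu> \<omega> = 0")
    case False
    then have m: "0 < \<mu> \<omega>" using nn w by fastforce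
    have "0 < A" "0 < B" "0 < law \<mu> S Y (Y \<omega>)"
      unfolding A_def B_def using law_pos[OF fS nn w m] by auto
    then show ?thesis unfolding AC by (simp add: log_divide algebra_simps)
  qed simp
qed

lemma cond_ent_mono:
  assumes fS: "finite S" and nn: "\<forall>\<omega>\<in>S. 0 \<le> \<mu> \<omega>" and f: "\<forall>\<omega>\<in>S. Y \<omega> = f (Y' \<omega>)"
  shows "cond_ent \<mu> S X Y' \<le> cond_ent \<mu> S X Y"
proof -
  define W where "W = (\<lambda>\<omega>. (X \<omega>, Y \<omega>))"
  define W' where "W' = (\<lambda>\<omega>. (X \<omega>, Y' \<omega>))"
  define F where "F = (\<lambda>\<omega>. law \<mu> S Y (Y \<omega>) * law \<mu> S W' (W' \<omega>) / (law \<mu> S W (W \<omega>) * law \<mu> S Y' (Y' \<omega>)))"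
  define G where "G = (\<lambda>w. law \<mu> S W (fst w, f (snd w)) * law \<mu> S Y' (snd w) / (law \<mu> S Y (f (snd w)) * law \<mu> S W' w))"
  note lnn = law_nonneg[OF nn]
  have "(\<Sum>\<omega>\<in>S. \<mu> \<omega> / F \<omega>) = (\<Sum>\<omega>\<in>S. \<mu> \<omega> * G (W' \<omega>))"
    unfolding F_def G_def W_def W'_def by (intro sum.cong) (use f in auto)
  also have "\<dots> = (\<Sum>w\<in>W' ` S. law \<mu> S W' w * G w)"
    by (rule sum_by_law[OF fS])
  also have "\<dots> \<le> (\<Sum>w\<in>W' ` S. law \<mu> S W (fst w, f (snd w)) * (law \<mu> S Y' (snd w) / law \<mu> S Y (f (snd w))))"
    by (intro sum_mono) (use lnn in \<open>auto simp: G_def lnn intro!: divide_nonneg_nonneg mult_nonneg_nonneg\<close>)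
  also have "\<dots> \<le> (\<Sum>w\<in>X ` S \<times> Y' ` S. law \<mu> S W (fst w, f (snd w)) * (law \<mu> S Y' (snd w) / law \<mu> S Y (f (snd w))))"
    by (intro sum_mono2) (use fS lnn in \<open>auto simp: W'_def lnn intro!: divide_nonneg_nonneg mult_nonneg_nonneg\<close>)
  also have "\<dots> = (\<Sum>y\<in>Y' ` S. (\<Sum>x\<in>X ` S. law \<mu> S W (x, f y)) * (law \<mu> S Y' y / law \<mu> S Y (f y)))"
    unfolding sum.cartesian_product' by (subst sum.swap) (simp add: sum_distrib_right sum_divide_distrib)
  also have "\<dots> = (\<Sum>y\<in>Y' ` S. law \<mu> S Y' y)"
  proof (intro sum.cong refl)
    fix y
    have "law \<mu> S Y' y \<le> law \<mu> S Y (f y)" using law_le_law_of_function[where f=f and Y=Y and Y'=Y', OF fS nn f] .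
    then show "(\<Sum>x\<in>X ` S. law \<mu> S W (x, f y)) * (law \<mu> S Y' y / law \<mu> S Y (f y)) = law \<mu> S Y' y"
      unfolding W_def law_marginal[OF fS] using lnn[of Y' y] by (cases "law \<mu> S Y (f y) = 0") auto
  qed
  also have "\<dots> = (\<Sum>\<omega>\<in>S. \<mu> \<omega>)" by (rule sum_law[OF fS])
  finally have le: "(\<Sum>\<omega>\<in>S. \<mu> \<omega> / F \<omega>) \<le> (\<Sum>\<omega>\<in>S. \<mu> \<omega>)" .
  have "0 < F \<omega>" if "\<omega> \<in> S" "0 < \<mu> \<omega>" for \<omega>
    using law_pos[OF fS nn that, of W] law_pos[OF fS nn that, of Y] law_pos[OF fS nn that, of W']
      law_pos[OF fS nn that, of Y'] unfolding F_def by simp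
  from gibbs[OF fS nn this le] have "0 \<le> (\<Sum>\<omega>\<in>S. \<mu> \<omega> * log 2 (F \<omega>))" .
  also have "(\<Sum>\<omega>\<in>S. \<mu> \<omega> * log 2 (F \<omega>)) = cond_ent \<mu> S X Y - cond_ent \<mu> S X Y'"
    unfolding cond_ent_def cross_ent_def sum_subtractf[symmetric]
  proof (intro sum.cong refl)
    fix \<omega> assume w: "\<omega> \<in> S"
    show "\<mu> \<omega> * log 2 (F \<omega>) =
        \<mu> \<omega> * log 2 (law \<mu> S Y (Y \<omega>) / law \<mu> S (\<lambda>\<omega>. (X \<omega>, Y \<omega>)) (X \<omega>, Y \<omega>))
        - \<mu> \<omega> * log 2 (law \<mu> S Y' (Y' \<omega>) / law \<mu> S (\<lambda>\<omega>. (X \<omega>, Y' \<omega>)) (X \<omega>, Y' \<omega>))"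
    proof (cases "\<mu> \<omega> = 0")
      case False
      then have m: "0 < \<mu> \<omega>" using nn w by fastforce
      show ?thesis using law_pos[OF fS nn w m, of W] law_pos[OF fS nn w m, of Y]
          law_pos[OF fS nn w m, of W'] law_pos[OF fS nn w m, of Y'] unfolding F_def W_def W'_def
        by (simp add: log_divide log_mult algebra_simps)
    qed simp
  qed
  finally show ?thesis by simp
qed


lemma cond_ent_le_card:
  assumes fS: "finite S" and nn: "\<forall>\<omega>\<in>S. 0 \<le> \<mu> \<omega>"
  shows "cond_ent \<mu> S X Y \<le> (\<Sum>\<omega>\<in>S. \<mu> \<omega>) * log 2 (real (card (X ` S)))"
proof (cases "S = {}")
  case True then show ?thesis by (simp add: cond_ent_def cross_ent_def)
next
  case False
  define K where "K = real (card (X ` S))"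
  have K: "1 \<le> K" unfolding K_def using False fS by (simp add: Suc_leI card_gt_0_iff)
  define W where "W = (\<lambda>\<omega>. (X \<omega>, Y \<omega>))"
  define F where "F = (\<lambda>\<omega>. K * law \<mu> S W (W \<omega>) / law \<mu> S Y (Y \<omega>))"
  note lnn = law_nonneg[OF nn]
  have "(\<Sum>\<omega>\<in>S. \<mu> \<omega> / F \<omega>) = (\<Sum>\<omega>\<in>S. \<mu> \<omega> * (\<lambda>w. law \<mu> S Y (snd w) / (K * law \<mu> S W w)) (W \<omega>))"
    unfolding F_def W_def by (intro sum.cong) auto
  also have "\<dots> = (\<Sum>w\<in>W ` S. law \<mu> S W w * (law \<mu> S Y (snd w) / (K * law \<mu> S W w)))"
    by (rule sum_by_law[OF fS])
  also have "\<dots> \<le> (\<Sum>w\<in>W ` S. law \<mu> S Y (snd w) / K)"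
    by (intro sum_mono) (use K in \<open>auto simp: lnn intro!: divide_nonneg_nonneg\<close>)
  also have "\<dots> \<le> (\<Sum>w\<in>X ` S \<times> Y ` S. law \<mu> S Y (snd w) / K)"
    by (intro sum_mono2) (use fS K in \<open>auto simp: W_def lnn intro!: divide_nonneg_nonneg\<close>)
  also have "\<dots> = K * (\<Sum>y\<in>Y ` S. law \<mu> S Y y / K)"
    unfolding sum.cartesian_product' by (simp add: K_def)
  also have "\<dots> = (\<Sum>\<omega>\<in>S. \<mu> \<omega>)"
    using K by (simp add: sum_divide_distrib[symmetric] sum_law[OF fS])
  finally have le: "(\<Sum>\<omega>\<in>S. \<mu> \<omega> / F \<omega>) \<le> (\<Sum>\<omega>\<in>S. \<mu> \<omega>)" .
  have "0 < F \<omega>" if "\<omega> \<in> S" "0 < \<mu> \<omega>" for \<omega>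
    using law_pos[OF fS nn that, of W] law_pos[OF fS nn that, of Y] K unfolding F_def by simp
  from gibbs[OF fS nn this le] have "0 \<le> (\<Sum>\<omega>\<in>S. \<mu> \<omega> * log 2 (F \<omega>))" .
  also have "(\<Sum>\<omega>\<in>S. \<mu> \<omega> * log 2 (F \<omega>)) = (\<Sum>\<omega>\<in>S. \<mu> \<omega> * log 2 K) - cond_ent \<mu> S X Y"
    unfolding cond_ent_def cross_ent_def sum_subtractf[symmetric]
  proof (intro sum.cong refl)
    fix \<omega> assume w: "\<omega> \<in> S"
    show "\<mu> \<omega> * log 2 (F \<omega>) = \<mu> \<omega> * log 2 K
      - \<mu> \<omega> * log 2 (law \<mu> S Y (Y \<omega>) / law \<mu> S (\<lambda>\<omega>. (X \<omega>, Y \<omega>)) (X \<omega>, Y \<omega>))"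
    proof (cases "\<mu> \<omega> = 0")
      case False
      then have m: "0 < \<mu> \<omega>" using nn w by fastforce
      show ?thesis using law_pos[OF fS nn w m, of W] law_pos[OF fS nn w m, of Y] K
        unfolding F_def W_def by (simp add: log_divide log_mult algebra_simps)
    qed simp
  qed
  finally show ?thesis by (simp add: sum_distrib_right[symmetric] K_def)
qed

lemma cond_ent_le_bits:
  assumes fS: "finite S" and nn: "\<forall>\<omega>\<in>S. 0 \<le> \<mu> \<omega>" and c: "card (X ` S) \<le> 2 ^ k"
  shows "cond_ent \<mu> S X Y \<le> (\<Sum>\<omega>\<in>S. \<mu> \<omega>) * real k"
proof (cases "S = {}")
  case True then show ?thesis by (simp add: cond_ent_def cross_ent_def)
next
  case False
  then have c0: "0 < card (X ` S)" using fS by (simp add: card_gt_0_iff)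
  have "log 2 (real (card (X ` S))) \<le> log 2 (2 ^ k)"
    using c c0 by (subst log_le_cancel_iff) (auto simp del: of_nat_power simp: of_nat_power[symmetric])
  also have "\<dots> = real k" by (simp add: log_nat_power)
  finally have "(\<Sum>\<omega>\<in>S. \<mu> \<omega>) * log 2 (real (card (X ` S))) \<le> (\<Sum>\<omega>\<in>S. \<mu> \<omega>) * real k"
    using nn by (intro mult_left_mono sum_nonneg) auto
  then show ?thesis using cond_ent_le_card[OF fS nn, of X Y] by linarith
qed

section \<open>Concavity of conditional entropy and the mixing bound\<close>

lemma cross_ent_add:
  "cross_ent (\<lambda>\<omega>. \<nu>1 \<omega> + \<nu>2 \<omega>) \<mu> S X Y = cross_ent \<nu>1 \<mu> S X Y + cross_ent \<nu>2 \<mu> S X Y"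
  unfolding cross_ent_def by (simp add: sum.distrib distrib_right)

lemma cond_ent_le_cross_ent:
  assumes fS: "finite S" and nn: "\<forall>\<omega>\<in>S. 0 \<le> \<nu> \<omega>" and dom: "\<forall>\<omega>\<in>S. \<nu> \<omega> \<le> \<mu> \<omega>"
  shows "cond_ent \<nu> S X Y \<le> cross_ent \<nu> \<mu> S X Y"
proof -
  have nn\<mu>: "\<forall>\<omega>\<in>S. 0 \<le> \<mu> \<omega>" using nn dom by force
  define W where "W = (\<lambda>\<omega>. (X \<omega>, Y \<omega>))"
  define F where "F = (\<lambda>\<omega>. law \<mu> S Y (Y \<omega>) * law \<nu> S W (W \<omega>) / (law \<mu> S W (W \<omega>) * law \<nu> S Y (Y \<omega>)))"
  define G where "G = (\<lambda>w. law \<mu> S W w * law \<nu> S Y (snd w) / (law \<mu> S Y (snd w) * law \<nu> S W w))"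
  note lnn = law_nonneg[OF nn] law_nonneg[OF nn\<mu>]
  have "(\<Sum>\<omega>\<in>S. \<nu> \<omega> / F \<omega>) = (\<Sum>\<omega>\<in>S. \<nu> \<omega> * G (W \<omega>))"
    unfolding F_def G_def W_def by (intro sum.cong) auto
  also have "\<dots> = (\<Sum>w\<in>W ` S. law \<nu> S W w * G w)"
    by (rule sum_by_law[OF fS])
  also have "\<dots> \<le> (\<Sum>w\<in>W ` S. law \<mu> S W w * (law \<nu> S Y (snd w) / law \<mu> S Y (snd w)))"
    by (intro sum_mono) (auto simp: G_def lnn intro!: divide_nonneg_nonneg mult_nonneg_nonneg)
  also have "\<dots> \<le> (\<Sum>w\<in>X ` S \<times> Y ` S. law \<mu> S W w * (law \<nu> S Y (snd w) / law \<mu> S Y (snd w)))"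
    by (intro sum_mono2) (use fS in \<open>auto simp: W_def lnn intro!: divide_nonneg_nonneg mult_nonneg_nonneg\<close>)
  also have "\<dots> = (\<Sum>y\<in>Y ` S. (\<Sum>x\<in>X ` S. law \<mu> S W (x, y)) * (law \<nu> S Y y / law \<mu> S Y y))"
    unfolding sum.cartesian_product' by (subst sum.swap) (simp add: sum_distrib_right sum_divide_distrib)
  also have "\<dots> = (\<Sum>y\<in>Y ` S. law \<nu> S Y y)"
  proof (intro sum.cong refl)
    fix y
    have "law \<nu> S Y y \<le> law \<mu> S Y y" by (rule law_mono_measure[OF dom])
    then show "(\<Sum>x\<in>X ` S. law \<mu> S W (x, y)) * (law \<nu> S Y y / law \<mu> S Y y) = law \<nu> S Y y"
      unfolding W_def law_marginal[OF fS] using lnn(1)[of Y y] by (cases "law \<mu> S Y y = 0") auto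
  qed
  also have "\<dots> = (\<Sum>\<omega>\<in>S. \<nu> \<omega>)" by (rule sum_law[OF fS])
  finally have le: "(\<Sum>\<omega>\<in>S. \<nu> \<omega> / F \<omega>) \<le> (\<Sum>\<omega>\<in>S. \<nu> \<omega>)" .
  have pos: "0 < law \<nu> S V (V \<omega>)" "0 < law \<mu> S V (V \<omega>)" if "\<omega> \<in> S" "0 < \<nu> \<omega>" for \<omega> and V :: "_ \<Rightarrow> 'v"
    using law_pos[OF fS nn that, of V] law_pos[OF fS nn\<mu> that(1), of V] dom that by force+
  have "0 < F \<omega>" if "\<omega> \<in> S" "0 < \<nu> \<omega>" for \<omega>
    using pos[OF that, of W] pos[OF that, of Y] unfolding F_def by simp
  from gibbs[OF fS nn this le] have "0 \<le> (\<Sum>\<omega>\<in>S. \<nu> \<omega> * log 2 (F \<omega>))" .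
  also have "(\<Sum>\<omega>\<in>S. \<nu> \<omega> * log 2 (F \<omega>)) = cross_ent \<nu> \<mu> S X Y - cond_ent \<nu> S X Y"
    unfolding cond_ent_def cross_ent_def sum_subtractf[symmetric]
  proof (intro sum.cong refl)
    fix \<omega> assume w: "\<omega> \<in> S"
    show "\<nu> \<omega> * log 2 (F \<omega>) =
        \<nu> \<omega> * log 2 (law \<mu> S Y (Y \<omega>) / law \<mu> S (\<lambda>\<omega>. (X \<omega>, Y \<omega>)) (X \<omega>, Y \<omega>))
        - \<nu> \<omega> * log 2 (law \<nu> S Y (Y \<omega>) / law \<nu> S (\<lambda>\<omega>. (X \<omega>, Y \<omega>)) (X \<omega>, Y \<omega>))"
    proof (cases "\<nu> \<omega> = 0")
      case False
      then have m: "0 < \<nu> \<omega>" using nn w by fastforce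
      show ?thesis using pos[OF w m, of W] pos[OF w m, of Y] unfolding F_def W_def
        by (simp add: log_divide log_mult algebra_simps)
    qed simp
  qed
  finally show ?thesis by simp
qed

lemma log_sum_marginal:
  assumes fS: "finite S" and nn: "\<forall>\<omega>\<in>S. 0 \<le> \<nu> \<omega>" and dom: "\<forall>\<omega>\<in>S. \<nu> \<omega> \<le> \<mu> \<omega>"
  defines "m \<equiv> (\<Sum>\<omega>\<in>S. \<nu> \<omega>)" and "M \<equiv> (\<Sum>\<omega>\<in>S. \<mu> \<omega>)"
  shows "(\<Sum>\<omega>\<in>S. \<nu> \<omega> * log 2 (law \<mu> S Y (Y \<omega>) / law \<nu> S Y (Y \<omega>))) \<le> m * log 2 (M / m)"
proof -
  have nn\<mu>: "\<forall>\<omega>\<in>S. 0 \<le> \<mu> \<omega>" using nn dom by force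
  have mM: "0 \<le> m" "m \<le> M" unfolding m_def M_def using nn dom by (auto intro: sum_nonneg sum_mono)
  have pos: "0 < law \<nu> S Y (Y \<omega>)" "0 < law \<mu> S Y (Y \<omega>)" "0 < m" if "\<omega> \<in> S" "0 < \<nu> \<omega>" for \<omega>
  proof -
    show "0 < law \<nu> S Y (Y \<omega>)" "0 < law \<mu> S Y (Y \<omega>)"
      using law_pos[OF fS nn that, of Y] law_pos[OF fS nn\<mu> that(1), of Y] dom that by force+
    have "\<nu> \<omega> \<le> m" unfolding m_def using fS that nn by (intro member_le_sum) auto
    then show "0 < m" using that by linarith
  qed
  define F where "F = (\<lambda>\<omega>. law \<nu> S Y (Y \<omega>) * M / (law \<mu> S Y (Y \<omega>) * m))"
  have "(\<Sum>\<omega>\<in>S. \<nu> \<omega> / F \<omega>) = (\<Sum>\<omega>\<in>S. \<nu> \<omega> * (\<lambda>y. law \<mu> S Y y * m / (law \<nu> S Y y * M)) (Y \<omega>))"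
    unfolding F_def by (intro sum.cong) auto
  also have "\<dots> = (\<Sum>y\<in>Y ` S. law \<nu> S Y y * (law \<mu> S Y y * m / (law \<nu> S Y y * M)))"
    by (rule sum_by_law[OF fS])
  also have "\<dots> \<le> (\<Sum>y\<in>Y ` S. law \<mu> S Y y * (m / M))"
    by (intro sum_mono) (use mM in \<open>auto simp: law_nonneg[OF nn\<mu>]\<close>)
  also have "\<dots> = M * (m / M)" unfolding M_def sum_distrib_right[symmetric] sum_law[OF fS] ..
  also have "\<dots> \<le> m" using mM by (cases "M = 0") auto
  finally have le: "(\<Sum>\<omega>\<in>S. \<nu> \<omega> / F \<omega>) \<le> (\<Sum>\<omega>\<in>S. \<nu> \<omega>)" unfolding m_def .
  have "0 < F \<omega>" if "\<omega> \<in> S" "0 < \<nu> \<omega>" for \<omega>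
    using pos[OF that] mM unfolding F_def by simp
  from gibbs[OF fS nn this le] have "0 \<le> (\<Sum>\<omega>\<in>S. \<nu> \<omega> * log 2 (F \<omega>))" .
  also have "(\<Sum>\<omega>\<in>S. \<nu> \<omega> * log 2 (F \<omega>))
      = m * log 2 (M / m) - (\<Sum>\<omega>\<in>S. \<nu> \<omega> * log 2 (law \<mu> S Y (Y \<omega>) / law \<nu> S Y (Y \<omega>)))"
    unfolding m_def sum_distrib_right sum_subtractf[symmetric]
  proof (intro sum.cong refl)
    fix \<omega> assume w: "\<omega> \<in> S"
    show "\<nu> \<omega> * log 2 (F \<omega>) = \<nu> \<omega> * log 2 (M / (\<Sum>\<omega>\<in>S. \<nu> \<omega>))
        - \<nu> \<omega> * log 2 (law \<mu> S Y (Y \<omega>) / law \<nu> S Y (Y \<omega>))"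
    proof (cases "\<nu> \<omega> = 0")
      case False
      then have v: "0 < \<nu> \<omega>" using nn w by fastforce
      show ?thesis using pos[OF w v] mM unfolding F_def m_def[symmetric]
        by (simp add: log_divide log_mult algebra_simps)
    qed simp
  qed
  finally show ?thesis by simp
qed

text \<open>Conversely, predicting with the dominating \<open>\<mu>\<close> costs at most \<open>H\<^sub>\<nu>(X | Y)\<close> plus
  \<open>\<nu>(S) log (\<mu>(S) / \<nu>(S))\<close>: replacing the joint law of \<open>\<nu>\<close> by the larger one of \<open>\<mu>\<close> only
  helps, and the remaining marginal term is handled by the log-sum inequality.\<close>
lemma cross_ent_le_cond_ent:
  assumes fS: "finite S" and nn: "\<forall>\<omega>\<in>S. 0 \<le> \<nu> \<omega>" and dom: "\<forall>\<omega>\<in>S. \<nu> \<omega> \<le> \<mu> \<omega>"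
  shows "cross_ent \<nu> \<mu> S X Y \<le> cond_ent \<nu> S X Y + (\<Sum>\<omega>\<in>S. \<nu> \<omega>) * log 2 ((\<Sum>\<omega>\<in>S. \<mu> \<omega>) / (\<Sum>\<omega>\<in>S. \<nu> \<omega>))"
proof -
  have nn\<mu>: "\<forall>\<omega>\<in>S. 0 \<le> \<mu> \<omega>" using nn dom by force
  define W where "W = (\<lambda>\<omega>. (X \<omega>, Y \<omega>))"
  have "cross_ent \<nu> \<mu> S X Y \<le> (\<Sum>\<omega>\<in>S. \<nu> \<omega> * log 2 (law \<nu> S Y (Y \<omega>) / law \<nu> S W (W \<omega>))
      + \<nu> \<omega> * log 2 (law \<mu> S Y (Y \<omega>) / law \<nu> S Y (Y \<omega>)))"
    unfolding cross_ent_def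
  proof (intro sum_mono)
    fix \<omega> assume w: "\<omega> \<in> S"
    show "\<nu> \<omega> * log 2 (law \<mu> S Y (Y \<omega>) / law \<mu> S (\<lambda>\<omega>. (X \<omega>, Y \<omega>)) (X \<omega>, Y \<omega>))
      \<le> \<nu> \<omega> * log 2 (law \<nu> S Y (Y \<omega>) / law \<nu> S W (W \<omega>))
        + \<nu> \<omega> * log 2 (law \<mu> S Y (Y \<omega>) / law \<nu> S Y (Y \<omega>))"
    proof (cases "\<nu> \<omega> = 0")
      case False
      then have v: "0 < \<nu> \<omega>" using nn w by fastforce
      have "0 < \<mu> \<omega>" using v dom w by force
      note p = law_pos[OF fS nn w v, of W] law_pos[OF fS nn w v, of Y]
        law_pos[OF fS nn\<mu> w this, of W] law_pos[OF fS nn\<mu> w this, of Y]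
      have "log 2 (law \<nu> S W (W \<omega>)) \<le> log 2 (law \<mu> S W (W \<omega>))"
        using law_mono_measure[OF dom, of W "W \<omega>"] p by simp
      then have "log 2 (law \<mu> S Y (Y \<omega>) / law \<mu> S W (W \<omega>))
          \<le> log 2 (law \<nu> S Y (Y \<omega>) / law \<nu> S W (W \<omega>)) + log 2 (law \<mu> S Y (Y \<omega>) / law \<nu> S Y (Y \<omega>))"
        using p by (simp add: log_divide)
      from mult_left_mono[OF this] v show ?thesis unfolding W_def by (simp add: algebra_simps)
    qed simp
  qed
  also have "\<dots> = cond_ent \<nu> S X Y + (\<Sum>\<omega>\<in>S. \<nu> \<omega> * log 2 (law \<mu> S Y (Y \<omega>) / law \<nu> S Y (Y \<omega>)))"
    unfolding cond_ent_def cross_ent_def W_def by (simp add: sum.distrib)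
  finally show ?thesis using log_sum_marginal[OF fS nn dom, of Y] by linarith
qed

lemma cond_ent_superadditive:
  assumes fS: "finite S" and nn1: "\<forall>\<omega>\<in>S. 0 \<le> \<mu>1 \<omega>" and nn2: "\<forall>\<omega>\<in>S. 0 \<le> \<mu>2 \<omega>"
  shows "cond_ent \<mu>1 S X Y + cond_ent \<mu>2 S X Y \<le> cond_ent (\<lambda>\<omega>. \<mu>1 \<omega> + \<mu>2 \<omega>) S X Y"
proof -
  let ?\<mu> = "\<lambda>\<omega>. \<mu>1 \<omega> + \<mu>2 \<omega>"
  have "cond_ent ?\<mu> S X Y = cross_ent \<mu>1 ?\<mu> S X Y + cross_ent \<mu>2 ?\<mu> S X Y"
    unfolding cond_ent_def by (rule cross_ent_add)
  moreover have "cond_ent \<mu>1 S X Y \<le> cross_ent \<mu>1 ?\<mu> S X Y"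
    by (rule cond_ent_le_cross_ent[OF fS nn1]) (use nn2 in auto)
  moreover have "cond_ent \<mu>2 S X Y \<le> cross_ent \<mu>2 ?\<mu> S X Y"
    by (rule cond_ent_le_cross_ent[OF fS nn2]) (use nn1 in auto)
  ultimately show ?thesis by linarith
qed

lemma cond_ent_mixing:
  assumes fS: "finite S" and nn1: "\<forall>\<omega>\<in>S. 0 \<le> \<mu>1 \<omega>" and nn2: "\<forall>\<omega>\<in>S. 0 \<le> \<mu>2 \<omega>"
  defines "M \<equiv> (\<Sum>\<omega>\<in>S. \<mu>1 \<omega> + \<mu>2 \<omega>)"
  shows "cond_ent (\<lambda>\<omega>. \<mu>1 \<omega> + \<mu>2 \<omega>) S X Y \<le> cond_ent \<mu>1 S X Y + cond_ent \<mu>2 S X Y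
     + (\<Sum>\<omega>\<in>S. \<mu>1 \<omega>) * log 2 (M / (\<Sum>\<omega>\<in>S. \<mu>1 \<omega>))
     + (\<Sum>\<omega>\<in>S. \<mu>2 \<omega>) * log 2 (M / (\<Sum>\<omega>\<in>S. \<mu>2 \<omega>))"
proof -
  let ?\<mu> = "\<lambda>\<omega>. \<mu>1 \<omega> + \<mu>2 \<omega>"
  have "cond_ent ?\<mu> S X Y = cross_ent \<mu>1 ?\<mu> S X Y + cross_ent \<mu>2 ?\<mu> S X Y"
    unfolding cond_ent_def by (rule cross_ent_add)
  moreover have "cross_ent \<mu>1 ?\<mu> S X Y \<le> cond_ent \<mu>1 S X Y + (\<Sum>\<omega>\<in>S. \<mu>1 \<omega>) * log 2 (M / (\<Sum>\<omega>\<in>S. \<mu>1 \<omega>))"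
    unfolding M_def by (rule cross_ent_le_cond_ent[OF fS nn1]) (use nn2 in auto)
  moreover have "cross_ent \<mu>2 ?\<mu> S X Y \<le> cond_ent \<mu>2 S X Y + (\<Sum>\<omega>\<in>S. \<mu>2 \<omega>) * log 2 (M / (\<Sum>\<omega>\<in>S. \<mu>2 \<omega>))"
    unfolding M_def by (rule cross_ent_le_cond_ent[OF fS nn2]) (use nn1 in auto)
  ultimately show ?thesis by linarith
qed


section \<open>Entropy of a binary variable and the Bhattacharyya parameter\<close>

lemma ln2_ge_half: "1/2 \<le> ln (2::real)"
proof -
  have "ln (1/2::real) \<le> 1/2 - 1" by (rule ln_le_minus_one) simp
  then show ?thesis by (simp add: ln_div)
qed

lemma div_ln2_le:
  assumes x: "0 \<le> (x::real)"
  shows "x / ln 2 \<le> 2 * x"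
proof -
  have "x * 1 \<le> x * (2 * ln 2)" using ln2_ge_half x by (intro mult_left_mono) auto
  then show ?thesis by (simp add: divide_le_eq algebra_simps)
qed

lemma entropy_term_ge:
  fixes a s :: real
  assumes "0 \<le> a" "a \<le> s" "0 < s"
  shows "a * (ln 2 + 1 - 2 * a / s) \<le> a * ln (s / a)"
proof (cases "a = 0")
  case False
  then have a: "0 < a" using assms by (auto simp: less_le)
  have "ln (2 * a / s) \<le> 2 * a / s - 1" using a assms by (intro ln_le_minus_one) simp
  moreover have "ln (2 * a / s) = ln 2 - ln (s / a)" using a assms by (simp add: ln_div ln_mult)
  ultimately have "ln 2 + 1 - 2 * a / s \<le> ln (s / a)" by linarith
  then show ?thesis using a by (intro mult_left_mono) auto
qed simp

lemma binary_entropy_ge_quadratic: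
  fixes a b :: real
  assumes a: "0 \<le> a" and b: "0 \<le> b" and s: "0 < a + b"
  shows "(a + b) - (a - b)^2 / ((a + b) * ln 2) \<le> b * log 2 ((a + b) / b) + a * log 2 ((a + b) / a)"
proof -
  define s where "s = a + b"
  have "a * (ln 2 + 1 - 2 * a / s) + b * (ln 2 + 1 - 2 * b / s) \<le> a * ln (s / a) + b * ln (s / b)"
    using entropy_term_ge[OF a, of s] entropy_term_ge[OF b, of s] a b s unfolding s_def by simp
  moreover have "a * (ln 2 + 1 - 2 * a / s) + b * (ln 2 + 1 - 2 * b / s) = s * ln 2 - (a - b)^2 / s"
  proof -
    have "(a - b)^2 = 2 * (a^2 + b^2) - s * s" unfolding s_def by (simp add: power2_eq_square algebra_simps)
    then have "(a - b)^2 / s = 2 * (a^2 + b^2) / s - s" using s by (simp add: s_def diff_divide_distrib)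
    moreover have "a * (2 * a / s) + b * (2 * b / s) = 2 * (a^2 + b^2) / s"
      by (simp add: power2_eq_square add_divide_distrib mult.left_commute)
    moreover have "a * (ln 2 + 1 - 2 * a / s) + b * (ln 2 + 1 - 2 * b / s)
        = s * ln 2 + s - (a * (2 * a / s) + b * (2 * b / s))"
      unfolding s_def by (simp add: algebra_simps)
    ultimately show ?thesis by linarith
  qed
  ultimately have "(s * ln 2 - (a - b)^2 / s) / ln 2 \<le> (a * ln (s / a) + b * ln (s / b)) / ln 2"
    by (intro divide_right_mono) auto
  moreover have "0 < s" using s unfolding s_def .
  ultimately have "s - (a - b)^2 / (s * ln 2) \<le> b * log 2 (s / b) + a * log 2 (s / a)"
    by (simp add: log_def field_simps)
  then show ?thesis unfolding s_def .
qed

text \<open>The quadratic defect is controlled by \<open>1 - Z\<close>, where \<open>Z = 2 \<surd>(ab) / s\<close>.\<close>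
lemma quadratic_le_bhatt:
  fixes a b :: real
  assumes a: "0 \<le> a" and b: "0 \<le> b" and s: "0 < a + b"
  shows "(a - b)^2 / ((a + b) * ln 2) \<le> 4 * ((a + b) - 2 * (a + b) * sqrt (a / (a + b) * (b / (a + b))))"
proof -
  define x where "x = sqrt a"
  define y where "y = sqrt b"
  have xa: "x^2 = a" "0 \<le> x" and yb: "y^2 = b" "0 \<le> y" using a b unfolding x_def y_def by simp_all
  have sq: "(a + b) * sqrt (a / (a + b) * (b / (a + b))) = x * y"
    using s a b unfolding x_def y_def by (simp add: real_sqrt_mult real_sqrt_divide)
  have diff: "(a - b)^2 = (x - y)^2 * (x + y)^2" and defect: "(a + b) - 2 * (x * y) = (x - y)^2"
    using xa yb by (simp_all add: power2_eq_square algebra_simps)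
  have "2 * (a + b) - (x + y)^2 = (x - y)^2"
    using xa yb by (simp add: power2_eq_square algebra_simps)
  then have "(x + y)^2 \<le> 2 * (a + b)" by (metis diff_ge_0_iff_ge zero_le_power2)
  then have "(a - b)^2 / ((a + b) * ln 2) \<le> (x - y)^2 * (2 * (a + b)) / ((a + b) * ln 2)"
    unfolding diff using s by (intro divide_right_mono mult_left_mono) auto
  also have "\<dots> = 2 * (x - y)^2 / ln 2" using s by (simp del: distrib_left_numeral)
  also have "\<dots> \<le> 4 * (x - y)^2" using div_ln2_le[of "2 * (x - y)^2"] by simp
  finally show ?thesis unfolding mult.assoc sq defect .
qed

lemma law_bool_split:
  fixes X :: "'o \<Rightarrow> bool"
  assumes "finite S"
  shows "law \<mu> S Y y = law \<mu> S (\<lambda>\<omega>. (X \<omega>, Y \<omega>)) (False, y) + law \<mu> S (\<lambda>\<omega>. (X \<omega>, Y \<omega>)) (True, y)"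
  unfolding law_def prb_def using assms
  by (subst sum.union_disjoint[symmetric]) (auto intro!: sum.cong)

lemma cond_ent_bool:
  fixes X :: "'o \<Rightarrow> bool" and Y :: "'o \<Rightarrow> 'b" and \<mu> :: "'o \<Rightarrow> real"
  assumes fS: "finite S"
  defines "A \<equiv> \<lambda>y. law \<mu> S (\<lambda>\<omega>. (X \<omega>, Y \<omega>)) (False, y)"
    and "B \<equiv> \<lambda>y. law \<mu> S (\<lambda>\<omega>. (X \<omega>, Y \<omega>)) (True, y)"
  shows "cond_ent \<mu> S X Y = (\<Sum>y\<in>Y ` S. B y * log 2 ((A y + B y) / B y) + A y * log 2 ((A y + B y) / A y))"
proof -
  define W where "W = (\<lambda>\<omega>. (X \<omega>, Y \<omega>))"
  define G where "G = (\<lambda>w. log 2 (law \<mu> S Y (snd w) / law \<mu> S W w))"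
  have "cond_ent \<mu> S X Y = (\<Sum>\<omega>\<in>S. \<mu> \<omega> * G (W \<omega>))"
    unfolding cond_ent_def cross_ent_def G_def W_def by simp
  also have "\<dots> = (\<Sum>w\<in>W ` S. law \<mu> S W w * G w)" by (rule sum_by_law[OF fS])
  also have "\<dots> = (\<Sum>w\<in>UNIV \<times> Y ` S. law \<mu> S W w * G w)"
    by (rule sum.mono_neutral_left) (use fS law_outside_range in \<open>auto simp: W_def\<close>)
  also have "\<dots> = (\<Sum>x\<in>UNIV. \<Sum>y\<in>Y ` S. law \<mu> S W (x, y) * G (x, y))"
    by (simp only: sum.cartesian_product')
  also have "\<dots> = (\<Sum>y\<in>Y ` S. law \<mu> S W (False, y) * G (False, y) + law \<mu> S W (True, y) * G (True, y))"
    by (simp add: UNIV_bool sum.distrib)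
  also have "\<dots> = (\<Sum>y\<in>Y ` S. B y * log 2 ((A y + B y) / B y) + A y * log 2 ((A y + B y) / A y))"
    by (simp add: G_def W_def A_def B_def law_bool_split[OF fS, of \<mu> Y _ X] add.commute)
  finally show ?thesis .
qed

lemma cond_ent_ge_bhatt:
  fixes X :: "'o \<Rightarrow> bool"
  assumes fS: "finite S" and nn: "\<forall>\<omega>\<in>S. 0 \<le> \<mu> \<omega>"
  shows "(\<Sum>\<omega>\<in>S. \<mu> \<omega>) - 4 * ((\<Sum>\<omega>\<in>S. \<mu> \<omega>) - bhatt \<mu> S X Y) \<le> cond_ent \<mu> S X Y"
proof -
  define A where "A = (\<lambda>y. law \<mu> S (\<lambda>\<omega>. (X \<omega>, Y \<omega>)) (False, y))"
  define B where "B = (\<lambda>y. law \<mu> S (\<lambda>\<omega>. (X \<omega>, Y \<omega>)) (True, y))"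
  define Z where "Z = (\<lambda>y. 2 * (A y + B y) * sqrt (A y / (A y + B y) * (B y / (A y + B y))))"
  have AB: "0 \<le> A y" "0 \<le> B y" for y unfolding A_def B_def by (simp_all add: law_nonneg[OF nn])
  have mass_split: "law \<mu> S Y y = A y + B y" for y
    unfolding A_def B_def by (rule law_bool_split[OF fS])
  have level: "(A y + B y) - 4 * ((A y + B y) - Z y) \<le> B y * log 2 ((A y + B y) / B y) + A y * log 2 ((A y + B y) / A y)" for y
  proof (cases "A y + B y = 0")
    case True
    then show ?thesis using AB[of y] by (simp add: Z_def add_nonneg_eq_0_iff)
  next
    case False
    then have "0 < A y + B y" using AB[of y] by linarith
    from binary_entropy_ge_quadratic[OF AB this] quadratic_le_bhatt[OF AB this]
    show ?thesis unfolding Z_def by linarith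
  qed
  have mass: "(\<Sum>y\<in>Y ` S. A y + B y) = (\<Sum>\<omega>\<in>S. \<mu> \<omega>)"
    using sum_law[OF fS, where V=Y and \<mu>=\<mu>] unfolding mass_split .
  have bh: "bhatt \<mu> S X Y = (\<Sum>y\<in>Y ` S. Z y)"
  proof -
    have "prb \<mu> S (\<lambda>\<omega>. \<not> X \<omega> \<and> Y \<omega> = y) = A y" "prb \<mu> S (\<lambda>\<omega>. X \<omega> \<and> Y \<omega> = y) = B y" for y
      unfolding A_def B_def law_def by (auto intro: prb_cong)
    moreover have "prb \<mu> S (\<lambda>\<omega>. Y \<omega> = y) = A y + B y" for y using mass_split[of y] by (simp add: law_def)
    ultimately have "bhatt \<mu> S X Y = 2 * (\<Sum>y\<in>Y ` S. (A y + B y) * sqrt (A y / (A y + B y) * (B y / (A y + B y))))"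
      unfolding bhatt_def by simp
    then show ?thesis unfolding Z_def by (simp add: sum_distrib_left mult.assoc del: distrib_left_numeral)
  qed
  have "(\<Sum>\<omega>\<in>S. \<mu> \<omega>) - 4 * ((\<Sum>\<omega>\<in>S. \<mu> \<omega>) - bhatt \<mu> S X Y)
      = (\<Sum>y\<in>Y ` S. (A y + B y) - 4 * ((A y + B y) - Z y))"
    unfolding bh mass[symmetric] by (simp only: sum_subtractf[symmetric] sum_distrib_left)
  also have "\<dots> \<le> cond_ent \<mu> S X Y"
    using sum_mono[OF level] unfolding cond_ent_bool[OF fS] A_def B_def .
  finally show ?thesis .
qed


lemma mutinf_as_sum:
  assumes fS: "finite S"
  shows "mutinf \<mu> S A B = (\<Sum>\<omega>\<in>S. \<mu> \<omega> *
     log 2 (law \<mu> S (\<lambda>\<omega>. (A \<omega>, B \<omega>)) (A \<omega>, B \<omega>) / (law \<mu> S A (A \<omega>) * law \<mu> S B (B \<omega>))))"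
proof -
  define W where "W = (\<lambda>\<omega>. (A \<omega>, B \<omega>))"
  define L where "L = (\<lambda>w. log 2 (law \<mu> S W w / (law \<mu> S A (fst w) * law \<mu> S B (snd w))))"
  have "(\<Sum>\<omega>\<in>S. \<mu> \<omega> * L (W \<omega>)) = (\<Sum>w\<in>W ` S. law \<mu> S W w * L w)"
    by (rule sum_by_law[OF fS])
  also have "\<dots> = (\<Sum>w\<in>A ` S \<times> B ` S. law \<mu> S W w * L w)"
    by (rule sum.mono_neutral_left) (use fS law_outside_range in \<open>auto simp: W_def\<close>)
  also have "\<dots> = mutinf \<mu> S A B"
    unfolding sum.cartesian_product' mutinf_def L_def W_def law_def by simp
  finally show ?thesis unfolding L_def W_def by simp
qed

lemma mutinf_nonneg:
  assumes fS: "finite S" and nn: "\<forall>\<omega>\<in>S. 0 \<le> \<mu> \<omega>" and one: "(\<Sum>\<omega>\<in>S. \<mu> \<omega>) = 1"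
  shows "0 \<le> mutinf \<mu> S A B"
proof -
  define W where "W = (\<lambda>\<omega>. (A \<omega>, B \<omega>))"
  define F where "F = (\<lambda>\<omega>. law \<mu> S W (W \<omega>) / (law \<mu> S A (A \<omega>) * law \<mu> S B (B \<omega>)))"
  define G where "G = (\<lambda>w. law \<mu> S A (fst w) * law \<mu> S B (snd w) / law \<mu> S W w)"
  note lnn = law_nonneg[OF nn]
  have "(\<Sum>\<omega>\<in>S. \<mu> \<omega> / F \<omega>) = (\<Sum>\<omega>\<in>S. \<mu> \<omega> * G (W \<omega>))"
    unfolding F_def G_def W_def by (intro sum.cong) auto
  also have "\<dots> = (\<Sum>w\<in>W ` S. law \<mu> S W w * G w)"
    by (rule sum_by_law[OF fS])
  also have "\<dots> \<le> (\<Sum>w\<in>W ` S. law \<mu> S A (fst w) * law \<mu> S B (snd w))"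
    by (intro sum_mono) (auto simp: G_def lnn)
  also have "\<dots> \<le> (\<Sum>w\<in>A ` S \<times> B ` S. law \<mu> S A (fst w) * law \<mu> S B (snd w))"
    by (intro sum_mono2) (use fS in \<open>auto simp: W_def lnn\<close>)
  also have "\<dots> = (\<Sum>a\<in>A ` S. law \<mu> S A a) * (\<Sum>b\<in>B ` S. law \<mu> S B b)"
    unfolding sum.cartesian_product' by (simp add: sum_product)
  also have "\<dots> = (\<Sum>\<omega>\<in>S. \<mu> \<omega>)" using one by (simp add: sum_law[OF fS])
  finally have le: "(\<Sum>\<omega>\<in>S. \<mu> \<omega> / F \<omega>) \<le> (\<Sum>\<omega>\<in>S. \<mu> \<omega>)" .
  have "0 < F \<omega>" if "\<omega> \<in> S" "0 < \<mu> \<omega>" for \<omega>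
    using law_pos[OF fS nn that, of W] law_pos[OF fS nn that, of A] law_pos[OF fS nn that, of B]
    unfolding F_def by simp
  from gibbs[OF fS nn this le] show ?thesis unfolding mutinf_as_sum[OF fS] F_def W_def .
qed

lemma mutinf_decomp:
  assumes fS: "finite S" and nn: "\<forall>\<omega>\<in>S. 0 \<le> \<mu> \<omega>" and one: "(\<Sum>\<omega>\<in>S. \<mu> \<omega>) = 1"
  shows "mutinf \<mu> S W (\<lambda>\<omega>. (V \<omega>, B \<omega>))
     = cond_ent \<mu> S W (\<lambda>_. ()) + cond_ent \<mu> S V B - cond_ent \<mu> S (\<lambda>\<omega>. (W \<omega>, V \<omega>)) B"
  unfolding mutinf_as_sum[OF fS] cond_ent_def cross_ent_def sum.distrib[symmetric] sum_subtractf[symmetric]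
proof (intro sum.cong refl)
  fix \<omega> assume w: "\<omega> \<in> S"
  have joint: "law \<mu> S (\<lambda>\<omega>. (W \<omega>, V \<omega>, B \<omega>)) (W \<omega>, V \<omega>, B \<omega>)
      = law \<mu> S (\<lambda>\<omega>. ((W \<omega>, V \<omega>), B \<omega>)) ((W \<omega>, V \<omega>), B \<omega>)"
    unfolding law_def by (rule prb_cong) auto
  have unit: "law \<mu> S (\<lambda>_. ()) () = 1" "law \<mu> S (\<lambda>\<omega>. (W \<omega>, ())) (W \<omega>, ()) = law \<mu> S W (W \<omega>)"
    using one by (simp_all add: law_def prb_def)
  show "\<mu> \<omega> * log 2 (law \<mu> S (\<lambda>\<omega>. (W \<omega>, V \<omega>, B \<omega>)) (W \<omega>, V \<omega>, B \<omega>)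
        / (law \<mu> S W (W \<omega>) * law \<mu> S (\<lambda>\<omega>. (V \<omega>, B \<omega>)) (V \<omega>, B \<omega>))) =
    \<mu> \<omega> * log 2 (law \<mu> S (\<lambda>_. ()) () / law \<mu> S (\<lambda>\<omega>. (W \<omega>, ())) (W \<omega>, ())) +
    \<mu> \<omega> * log 2 (law \<mu> S B (B \<omega>) / law \<mu> S (\<lambda>\<omega>. (V \<omega>, B \<omega>)) (V \<omega>, B \<omega>)) -
    \<mu> \<omega> * log 2 (law \<mu> S B (B \<omega>) / law \<mu> S (\<lambda>\<omega>. ((W \<omega>, V \<omega>), B \<omega>)) ((W \<omega>, V \<omega>), B \<omega>))"
  proof (cases "\<mu> \<omega> = 0")
    case False
    then have m: "0 < \<mu> \<omega>" using nn w by fastforce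
    show ?thesis unfolding joint unit
      using law_pos[OF fS nn w m, of "\<lambda>\<omega>. ((W \<omega>, V \<omega>), B \<omega>)"] law_pos[OF fS nn w m, of W]
        law_pos[OF fS nn w m, of "\<lambda>\<omega>. (V \<omega>, B \<omega>)"] law_pos[OF fS nn w m, of B]
      by (simp add: log_divide log_mult algebra_simps)
  qed simp
qed

lemma card_restrict_image:
  fixes T :: "'o \<Rightarrow> 'i \<Rightarrow> bool"
  assumes "finite J"
  shows "card ((\<lambda>\<omega>. restrict (T \<omega>) J) ` S) \<le> 2 ^ card J"
proof -
  have "(\<lambda>\<omega>. restrict (T \<omega>) J) ` S \<subseteq> PiE J (\<lambda>_. UNIV)" by auto
  then have "card ((\<lambda>\<omega>. restrict (T \<omega>) J) ` S) \<le> card (PiE J (\<lambda>_. UNIV :: bool set))"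
    using assms by (intro card_mono) (simp_all add: finite_PiE)
  also have "\<dots> = 2 ^ card J" using assms by (simp add: card_PiE)
  finally show ?thesis .
qed

lemma restrict_insert_eq:
  "(restrict f (insert b A) = restrict g (insert b A)) = (f b = g b \<and> restrict f A = restrict g A)"
  by (auto simp: restrict_def fun_eq_iff split: if_splits)

lemma restrict_split_eq:
  assumes "A \<subseteq> I"
  shows "(restrict f (I - A) = restrict g (I - A) \<and> restrict f A = restrict g A) = (restrict f I = restrict g I)"
  using assms by (auto simp: restrict_def fun_eq_iff split: if_splits)

text \<open>Chain rule plus "conditioning reduces entropy": the bits \<open>T[J]\<close> jointly carry at
  least the sum over \<open>i \<in> J\<close> of the entropies of \<open>T\<^sub>i\<close> given the whole past \<open>T\<^sub>0 \<dots> T\<^sub>i\<^sub>-\<^sub>1\<close>.\<close>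
lemma cond_ent_restrict_ge_sum:
  fixes T :: "'o \<Rightarrow> nat \<Rightarrow> bool"
  assumes fS: "finite S" and nn: "\<forall>\<omega>\<in>S. 0 \<le> \<mu> \<omega>" and fJ: "finite J"
  shows "(\<Sum>i\<in>J. cond_ent \<mu> S (\<lambda>\<omega>. T \<omega> i) (\<lambda>\<omega>. (map (T \<omega>) [0..<i], B \<omega>)))
    \<le> cond_ent \<mu> S (\<lambda>\<omega>. restrict (T \<omega>) J) B"
  using fJ
proof (induction J rule: finite_linorder_max_induct)
  case empty
  then show ?case using cond_ent_nonneg[OF fS nn] by simp
next
  case (insert b A)
  have "cond_ent \<mu> S (\<lambda>\<omega>. restrict (T \<omega>) (insert b A)) B
      = cond_ent \<mu> S (\<lambda>\<omega>. (T \<omega> b, restrict (T \<omega>) A)) B"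
    by (rule cond_ent_cong) (simp add: restrict_insert_eq)
  also have "\<dots> = cond_ent \<mu> S (\<lambda>\<omega>. restrict (T \<omega>) A) B
      + cond_ent \<mu> S (\<lambda>\<omega>. T \<omega> b) (\<lambda>\<omega>. (restrict (T \<omega>) A, B \<omega>))"
    by (rule cond_ent_chain[OF fS nn])
  finally have chain: "cond_ent \<mu> S (\<lambda>\<omega>. restrict (T \<omega>) (insert b A)) B = \<dots>" .
  \<comment> \<open>every index of \<open>A\<close> precedes \<open>b\<close>, so \<open>T[A]\<close> is a function of the past of \<open>b\<close>\<close>
  have past: "cond_ent \<mu> S (\<lambda>\<omega>. T \<omega> b) (\<lambda>\<omega>. (map (T \<omega>) [0..<b], B \<omega>))
      \<le> cond_ent \<mu> S (\<lambda>\<omega>. T \<omega> b) (\<lambda>\<omega>. (restrict (T \<omega>) A, B \<omega>))"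
    by (rule cond_ent_mono[OF fS nn, where f="\<lambda>(past, z). (restrict (\<lambda>k. past ! k) A, z)"])
      (use insert(2) in \<open>auto intro!: restrict_ext\<close>)
  have b: "b \<notin> A" using insert(2) by auto
  show ?case unfolding sum.insert[OF insert(1) b] chain using insert(3) past by linarith
qed

lemma cond_ent_restrict_ge:
  fixes T :: "'o \<Rightarrow> nat \<Rightarrow> bool"
  assumes fS: "finite S" and nn: "\<forall>\<omega>\<in>S. 0 \<le> \<mu> \<omega>" and one: "(\<Sum>\<omega>\<in>S. \<mu> \<omega>) = 1"
    and fI: "finite I"
    and high: "\<forall>i\<in>I. 1 - \<delta> \<le> bhatt \<mu> S (\<lambda>\<omega>. T \<omega> i) (\<lambda>\<omega>. (map (T \<omega>) [0..<i], B \<omega>))"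
  shows "real (card I) * (1 - 4 * \<delta>) \<le> cond_ent \<mu> S (\<lambda>\<omega>. restrict (T \<omega>) I) B"
proof -
  have "1 - 4 * \<delta> \<le> cond_ent \<mu> S (\<lambda>\<omega>. T \<omega> i) (\<lambda>\<omega>. (map (T \<omega>) [0..<i], B \<omega>))" if "i \<in> I" for i
    using cond_ent_ge_bhatt[OF fS nn, of "\<lambda>\<omega>. T \<omega> i" "\<lambda>\<omega>. (map (T \<omega>) [0..<i], B \<omega>)"] high that one
    by auto
  then have "(\<Sum>i\<in>I. 1 - 4 * \<delta>) \<le> (\<Sum>i\<in>I. cond_ent \<mu> S (\<lambda>\<omega>. T \<omega> i) (\<lambda>\<omega>. (map (T \<omega>) [0..<i], B \<omega>)))"
    by (rule sum_mono)
  then show ?thesis using cond_ent_restrict_ge_sum[OF fS nn fI, where T=T and B=B] by simp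
qed

lemma mutinf_le_entropy_deficit:
  fixes T :: "'o \<Rightarrow> 'i \<Rightarrow> bool"
  assumes fS: "finite S" and nn: "\<forall>\<omega>\<in>S. 0 \<le> \<mu> \<omega>" and one: "(\<Sum>\<omega>\<in>S. \<mu> \<omega>) = 1"
    and fI: "finite I" and AI: "A \<subseteq> I"
  shows "mutinf \<mu> S (\<lambda>\<omega>. restrict (T \<omega>) (I - A)) (\<lambda>\<omega>. (restrict (T \<omega>) A, B \<omega>))
    \<le> real (card I) - cond_ent \<mu> S (\<lambda>\<omega>. restrict (T \<omega>) I) B"
proof -
  have fA: "finite A" "finite (I - A)" using fI AI by (auto intro: finite_subset)
  have "cond_ent \<mu> S (\<lambda>\<omega>. (restrict (T \<omega>) (I - A), restrict (T \<omega>) A)) B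
      = cond_ent \<mu> S (\<lambda>\<omega>. restrict (T \<omega>) I) B"
    by (rule cond_ent_cong) (use restrict_split_eq[OF AI] in auto)
  moreover have "cond_ent \<mu> S (\<lambda>\<omega>. restrict (T \<omega>) (I - A)) (\<lambda>_. ()) \<le> real (card (I - A))"
    using cond_ent_le_bits[OF fS nn card_restrict_image[OF fA(2)]] one by simp
  moreover have "cond_ent \<mu> S (\<lambda>\<omega>. restrict (T \<omega>) A) B \<le> real (card A)"
    using cond_ent_le_bits[OF fS nn card_restrict_image[OF fA(1)]] one by simp
  moreover have "real (card (I - A)) + real (card A) = real (card I)"
    using card_Diff_subset[OF fA(1) AI] card_mono[OF fI AI] by simp
  ultimately show ?thesis unfolding mutinf_decomp[OF fS nn one] by linarith
qed

section \<open>Continuity of conditional entropy in total variation\<close>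

definition bin_ent :: "real \<Rightarrow> real" where
  "bin_ent e = e * log 2 (1 / e) + (1 - e) * log 2 (1 / (1 - e))"

lemma entropy_tangent:
  assumes "0 \<le> m" "0 < y"
  shows "m * log 2 (1 / m) \<le> m * log 2 (1 / y) + (y - m) / ln 2"
proof (cases "m = 0")
  case True then show ?thesis using assms by simp
next
  case False
  then have m: "0 < m" using assms by simp
  have "ln (y / m) \<le> y / m - 1" using m assms by (intro ln_le_minus_one) simp
  then have "m * ln (y / m) \<le> m * (y / m - 1)" using m by (intro mult_left_mono) auto
  then have "m * ln (y / m) \<le> y - m" using m by (simp add: algebra_simps)
  then have "m * ln (y / m) / ln 2 \<le> (y - m) / ln 2" by (intro divide_right_mono) auto
  moreover have "m * log 2 (1 / m) = m * log 2 (1 / y) + m * ln (y / m) / ln 2"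
    using m assms by (simp add: log_def ln_div algebra_simps diff_divide_distrib)
  ultimately show ?thesis by linarith
qed

text \<open>For any \<open>\<eta> > 0\<close>, \<open>h(e) \<le> e log (1/\<eta>) + \<eta> / ln 2\<close>: both terms of \<open>h\<close> are bounded by tangents.\<close>
lemma bin_ent_le:
  assumes "0 \<le> e" "e \<le> 1" "0 < \<eta>"
  shows "bin_ent e \<le> e * log 2 (1 / \<eta>) + \<eta> / ln 2"
proof -
  have "(1 - e) * log 2 (1 / (1 - e)) \<le> e / ln 2"
    using entropy_tangent[of "1 - e" 1] assms by simp
  moreover have "e * log 2 (1 / e) \<le> e * log 2 (1 / \<eta>) + (\<eta> - e) / ln 2"
    using entropy_tangent[of e \<eta>] assms by simp
  ultimately show ?thesis unfolding bin_ent_def diff_divide_distrib by linarith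
qed

text \<open>Write \<open>P = \<mu> + \<alpha>\<close> and
  \<open>Q = \<mu> + \<gamma>\<close> with \<open>\<mu> = min P Q\<close>; then \<open>H\<^sub>P \<le> H\<^sub>\<mu> + H\<^sub>\<alpha> + h(\<epsilon>)\<close> by mixing, \<open>H\<^sub>\<alpha> \<le> \<epsilon> k\<close>,
  and \<open>H\<^sub>\<mu> \<le> H\<^sub>Q\<close> by concavity.\<close>
lemma cond_ent_transfer:
  assumes fS: "finite S" and nnP: "\<forall>\<omega>\<in>S. 0 \<le> P \<omega>" and nnQ: "\<forall>\<omega>\<in>S. 0 \<le> Q \<omega>"
    and sumP: "(\<Sum>\<omega>\<in>S. P \<omega>) = 1" and sumQ: "(\<Sum>\<omega>\<in>S. Q \<omega>) = 1"
    and card: "card (X ` S) \<le> 2 ^ k"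
  defines "\<epsilon> \<equiv> (\<Sum>\<omega>\<in>S. \<bar>P \<omega> - Q \<omega>\<bar>) / 2"
  shows "cond_ent P S X Y \<le> cond_ent Q S X Y + \<epsilon> * real k + bin_ent \<epsilon>"
proof -
  define \<mu> where "\<mu> = (\<lambda>\<omega>. min (P \<omega>) (Q \<omega>))"
  define \<alpha> where "\<alpha> = (\<lambda>\<omega>. P \<omega> - \<mu> \<omega>)"
  define \<gamma> where "\<gamma> = (\<lambda>\<omega>. Q \<omega> - \<mu> \<omega>)"
  have nn: "\<forall>\<omega>\<in>S. 0 \<le> \<mu> \<omega>" "\<forall>\<omega>\<in>S. 0 \<le> \<alpha> \<omega>" "\<forall>\<omega>\<in>S. 0 \<le> \<gamma> \<omega>"
    using nnP nnQ unfolding \<mu>_def \<alpha>_def \<gamma>_def by auto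
  have P: "P = (\<lambda>\<omega>. \<mu> \<omega> + \<alpha> \<omega>)" and Q: "Q = (\<lambda>\<omega>. \<mu> \<omega> + \<gamma> \<omega>)"
    unfolding \<alpha>_def \<gamma>_def by auto
  have "(\<Sum>\<omega>\<in>S. \<bar>P \<omega> - Q \<omega>\<bar>) = (\<Sum>\<omega>\<in>S. \<alpha> \<omega>) + (\<Sum>\<omega>\<in>S. \<gamma> \<omega>)"
    unfolding sum.distrib[symmetric] by (rule sum.cong) (auto simp: \<alpha>_def \<gamma>_def \<mu>_def min_def)
  moreover have "(\<Sum>\<omega>\<in>S. \<mu> \<omega>) + (\<Sum>\<omega>\<in>S. \<alpha> \<omega>) = 1" "(\<Sum>\<omega>\<in>S. \<mu> \<omega>) + (\<Sum>\<omega>\<in>S. \<gamma> \<omega>) = 1"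
    using sumP sumQ unfolding P Q by (simp_all add: sum.distrib)
  ultimately have mass: "(\<Sum>\<omega>\<in>S. \<alpha> \<omega>) = \<epsilon>" "(\<Sum>\<omega>\<in>S. \<mu> \<omega>) = 1 - \<epsilon>"
    unfolding \<epsilon>_def by linarith+
  have "cond_ent P S X Y \<le> cond_ent \<mu> S X Y + cond_ent \<alpha> S X Y + bin_ent \<epsilon>"
    using cond_ent_mixing[OF fS nn(1,2), of X Y] sumP mass unfolding P[symmetric] bin_ent_def
    by (simp add: algebra_simps)
  moreover have "cond_ent \<alpha> S X Y \<le> \<epsilon> * real k"
    using cond_ent_le_bits[OF fS nn(2) card] mass by simp
  moreover have "cond_ent \<mu> S X Y \<le> cond_ent Q S X Y"
    using cond_ent_superadditive[OF fS nn(1,3), of X Y] cond_ent_nonneg[OF fS nn(3), of X Y]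
    unfolding Q[symmetric] by linarith
  ultimately show ?thesis by linarith
qed

lemma finite_outcomes:
  assumes "finite X" "finite Z"
  shows "finite (outcomes N X Z)"
  using finite_lists_length_eq[of "UNIV \<times> UNIV \<times> X \<times> Z :: (bool \<times> bool \<times> _ \<times> _) set" N] assms
  unfolding outcomes_def by (simp add: conj_commute)

lemma iid_sum:
  fixes p :: "'a \<Rightarrow> real"
  assumes "finite \<Omega>"
  shows "(\<Sum>\<omega>\<in>{\<omega>. length \<omega> = N \<and> set \<omega> \<subseteq> \<Omega>}. iid p \<omega>) = (\<Sum>w\<in>\<Omega>. p w) ^ N"
proof (induction N)
  case 0
  have "{\<omega>::'a list. length \<omega> = 0 \<and> set \<omega> \<subseteq> \<Omega>} = {[]}" by auto
  then show ?case by (simp add: iid_def)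
next
  case (Suc N)
  define L where "L = {\<omega>. length \<omega> = N \<and> set \<omega> \<subseteq> \<Omega>}"
  have words: "{\<omega>. length \<omega> = Suc N \<and> set \<omega> \<subseteq> \<Omega>} = (\<lambda>(w, \<omega>). w # \<omega>) ` (\<Omega> \<times> L)"
    unfolding L_def by (auto simp: length_Suc_conv image_iff)
  have inj: "inj_on (\<lambda>(w, \<omega>). w # \<omega>) (\<Omega> \<times> L)" by (auto simp: inj_on_def)
  have "(\<Sum>\<omega>\<in>{\<omega>. length \<omega> = Suc N \<and> set \<omega> \<subseteq> \<Omega>}. iid p \<omega>) = (\<Sum>(w, \<omega>)\<in>\<Omega> \<times> L. p w * iid p \<omega>)"
    unfolding words sum.reindex[OF inj] by (intro sum.cong) (auto simp: iid_def)
  also have "\<dots> = (\<Sum>w\<in>\<Omega>. \<Sum>\<omega>\<in>L. p w * iid p \<omega>)"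
    unfolding sum.cartesian_product' by simp
  also have "\<dots> = (\<Sum>w\<in>\<Omega>. p w) * (\<Sum>\<omega>\<in>L. iid p \<omega>)"
    by (simp add: sum_product)
  finally show ?case using Suc unfolding L_def by simp
qed


text \<open>Collecting the error terms: with \<open>\<epsilon> \<le> N \<delta>\<close>, \<open>|I| \<le> N\<close> and \<open>N\<^sup>\<beta> \<le> N\<close>, every term is
  at most a multiple of \<open>N\<^sup>3 \<delta>\<close>.\<close>
lemma error_terms_le:
  fixes N \<delta> \<epsilon> c L :: real
  assumes N: "1 \<le> N" and \<delta>: "0 \<le> \<delta>" and \<epsilon>: "0 \<le> \<epsilon>" "\<epsilon> \<le> N * \<delta>" and c: "c \<le> N" and L: "L \<le> N"
  shows "4 * \<delta> * c + \<epsilon> * c + \<epsilon> * L + \<delta> / ln 2 \<le> 10 * N ^ 3 * \<delta>"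
proof -
  have "\<epsilon> * c \<le> N * \<delta> * N" "\<epsilon> * L \<le> N * \<delta> * N"
    using mult_left_mono[OF c \<epsilon>(1)] mult_left_mono[OF L \<epsilon>(1)] mult_right_mono[OF \<epsilon>(2), of N] N
    by linarith+
  moreover have "4 * \<delta> * c \<le> 4 * \<delta> * N" using mult_left_mono[OF c, of "4 * \<delta>"] \<delta> by simp
  moreover have "\<delta> / ln 2 \<le> 2 * \<delta>" by (rule div_ln2_le[OF \<delta>])
  ultimately have "4 * \<delta> * c + \<epsilon> * c + \<epsilon> * L + \<delta> / ln 2 \<le> 4 * \<delta> * N + N * \<delta> * N + N * \<delta> * N + 2 * \<delta>"
    by linarith
  also have "\<dots> = \<delta> * (4 * N + 2 * N ^ 2 + 2)" by (simp add: power2_eq_square algebra_simps)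
  also have "\<dots> \<le> \<delta> * (10 * N ^ 3)"
  proof (rule mult_left_mono[OF _ \<delta>])
    have "1 \<le> N ^ 3" "N \<le> N ^ 3" "N ^ 2 \<le> N ^ 3"
      using N by (auto simp: power_increasing[of 1 3 N, simplified] power_increasing[of 2 3 N])
    then show "4 * N + 2 * N ^ 2 + 2 \<le> 10 * N ^ 3" by linarith
  qed
  finally show ?thesis by (simp add: algebra_simps)
qed

text \<open>The quantitative form of the theorem, with the explicit constant 10 and valid for every
  \<open>N = 2\<^sup>n\<close>: combine steps (1)-(3) for \<open>T = V\<^sup>N G\<^sub>N\<close>, \<open>B = (U\<^sup>N, Z\<^sup>N)\<close>, \<open>\<eta> = \<delta>\<close>.\<close>
theorem polar_mutinf_bound:
  fixes X :: "'x set" and Z :: "'z set" and p :: "bool \<times> bool \<times> 'x \<times> 'z \<Rightarrow> real"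
    and Q :: "(bool \<times> bool \<times> 'x \<times> 'z) list \<Rightarrow> real"
  assumes \<beta>: "0 < \<beta>" "\<beta> < 1/2" and fX: "finite X" and fZ: "finite Z"
    and pnn: "\<forall>w. p w \<ge> 0" and psum: "(\<Sum>w\<in>UNIV \<times> UNIV \<times> X \<times> Z. p w) = 1"
    and Qnn: "\<forall>\<omega>\<in>outcomes (2 ^ n) X Z. Q \<omega> \<ge> 0"
    and Qsum: "(\<Sum>\<omega>\<in>outcomes (2 ^ n) X Z. Q \<omega>) = 1"
    and close: "(\<Sum>\<omega>\<in>outcomes (2 ^ n) X Z. \<bar>iid p \<omega> - Q \<omega>\<bar>) \<le> 2 * real (2 ^ n) * 2 powr (- (real (2 ^ n) powr \<beta>))"
    and I_high: "\<I> \<subseteq> Hset \<beta> n p X Z" and AI: "\<A> \<subseteq> \<I>"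
  shows "\<bar>mutinf Q (outcomes (2 ^ n) X Z) (\<lambda>\<omega>. restrict (Tv n \<omega>) (\<I> - \<A>)) (\<lambda>\<omega>. (restrict (Tv n \<omega>) \<A>, Uv \<omega>, Zv \<omega>))\<bar>
     \<le> 10 * real (2 ^ n) ^ 3 * 2 powr (- (real (2 ^ n) powr \<beta>))"
proof -
  define N :: real where "N = real (2 ^ n)"
  define \<delta> where "\<delta> = 2 powr (- (N powr \<beta>))"
  define S where "S = outcomes (2 ^ n) X Z"
  define P where "P = iid p"
  define R where "R = (\<lambda>\<omega>::(bool \<times> bool \<times> 'x \<times> 'z) list. restrict (Tv n \<omega>) \<I>)"
  define B where "B = (\<lambda>\<omega>::(bool \<times> bool \<times> 'x \<times> 'z) list. (Uv \<omega>, Zv \<omega>))"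
  define \<epsilon> where "\<epsilon> = (\<Sum>\<omega>\<in>S. \<bar>P \<omega> - Q \<omega>\<bar>) / 2"
  have fS: "finite S" unfolding S_def by (rule finite_outcomes[OF fX fZ])
  have Pnn: "\<forall>\<omega>\<in>S. 0 \<le> P \<omega>" unfolding P_def iid_def using pnn by (auto intro!: prod_list_nonneg)
  have Psum: "(\<Sum>\<omega>\<in>S. P \<omega>) = 1"
    using iid_sum[of "UNIV \<times> UNIV \<times> X \<times> Z" p "2 ^ n"] fX fZ psum unfolding S_def P_def outcomes_def by simp
  note Qnn = Qnn[folded S_def] and Qsum = Qsum[folded S_def]
  have I_below: "\<I> \<subseteq> {..<2 ^ n}" using I_high unfolding Hset_def by auto
  then have fI: "finite \<I>" and cI: "real (card \<I>) \<le> N"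
    unfolding N_def using card_mono[OF _ I_below] by (auto intro: finite_subset)
  have \<epsilon>: "0 \<le> \<epsilon>" "\<epsilon> \<le> 1" "\<epsilon> \<le> N * \<delta>"
  proof -
    have "(\<Sum>\<omega>\<in>S. \<bar>P \<omega> - Q \<omega>\<bar>) \<le> (\<Sum>\<omega>\<in>S. P \<omega> + Q \<omega>)" using Pnn Qnn by (intro sum_mono) (auto simp: abs_le_iff)
    then show "0 \<le> \<epsilon>" "\<epsilon> \<le> 1" "\<epsilon> \<le> N * \<delta>"
      using close Psum Qsum unfolding \<epsilon>_def S_def[symmetric] P_def[symmetric] N_def[symmetric] \<delta>_def[symmetric]
      by (auto simp: sum.distrib intro: sum_nonneg)
  qed
  have "real (card \<I>) * (1 - 4 * \<delta>) \<le> cond_ent P S R B"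
    unfolding R_def using I_high fI by (intro cond_ent_restrict_ge[OF fS Pnn Psum])
      (auto simp: Hset_def \<delta>_def N_def P_def S_def B_def)
  \<comment> \<open>step (2), with \<open>log (1/\<delta>) = N\<^sup>\<beta>\<close>\<close>
  moreover have "cond_ent P S R B \<le> cond_ent Q S R B + \<epsilon> * real (card \<I>) + bin_ent \<epsilon>"
    unfolding \<epsilon>_def R_def by (rule cond_ent_transfer[OF fS Pnn Qnn Psum Qsum card_restrict_image[OF fI]])
  moreover have "bin_ent \<epsilon> \<le> \<epsilon> * N powr \<beta> + \<delta> / ln 2"
    using bin_ent_le[OF \<epsilon>(1,2), of \<delta>] by (simp add: \<delta>_def powr_minus_divide[symmetric])
  moreover have "mutinf Q S (\<lambda>\<omega>. restrict (Tv n \<omega>) (\<I> - \<A>)) (\<lambda>\<omega>. (restrict (Tv n \<omega>) \<A>, B \<omega>))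
      \<le> real (card \<I>) - cond_ent Q S R B"
    unfolding R_def by (rule mutinf_le_entropy_deficit[OF fS Qnn Qsum fI AI])
  moreover have "4 * \<delta> * real (card \<I>) + \<epsilon> * real (card \<I>) + \<epsilon> * N powr \<beta> + \<delta> / ln 2 \<le> 10 * N ^ 3 * \<delta>"
    using \<epsilon> cI \<beta> powr_mono[of \<beta> 1 N] by (intro error_terms_le) (auto simp: N_def \<delta>_def)
  moreover have "0 \<le> mutinf Q S (\<lambda>\<omega>. restrict (Tv n \<omega>) (\<I> - \<A>)) (\<lambda>\<omega>. (restrict (Tv n \<omega>) \<A>, B \<omega>))"
    by (rule mutinf_nonneg[OF fS Qnn Qsum])
  ultimately show ?thesis unfolding S_def B_def N_def \<delta>_def by (simp add: algebra_simps)
qed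

theorem lemma3:
  "\<forall>k::nat. \<exists>C::real. \<forall>\<beta>::real. \<forall>(X::'x set) (Z::'z set) (p :: bool \<times> bool \<times> 'x \<times> 'z \<Rightarrow> real).
     0 < \<beta> \<and> \<beta> < 1/2 \<and> finite X \<and> finite Z \<and> card Z = k \<and>
     (\<forall>w. p w \<ge> 0) \<and> (\<forall>w. p w \<noteq> 0 \<longrightarrow> w \<in> UNIV \<times> UNIV \<times> X \<times> Z) \<and>
     (\<Sum>w\<in>UNIV \<times> UNIV \<times> X \<times> Z. p w) = 1
     \<longrightarrow> (\<exists>N0::nat. \<forall>n (Q :: (bool \<times> bool \<times> 'x \<times> 'z) list \<Rightarrow> real) \<I> \<A>.
           2 ^ n \<ge> N0 \<and>
           (\<forall>\<omega>\<in>outcomes (2 ^ n) X Z. Q \<omega> \<ge> 0) \<and>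
           (\<Sum>\<omega>\<in>outcomes (2 ^ n) X Z. Q \<omega>) = 1 \<and>
           (\<Sum>\<omega>\<in>outcomes (2 ^ n) X Z. \<bar>iid p \<omega> - Q \<omega>\<bar>)
              \<le> 2 * real (2 ^ n) * 2 powr (- (real (2 ^ n) powr \<beta>)) \<and>
           \<I> \<subseteq> Hset \<beta> n p X Z \<and> \<A> \<subseteq> \<I>
           \<longrightarrow> \<bar>mutinf Q (outcomes (2 ^ n) X Z)
                  (\<lambda>\<omega>. restrict (Tv n \<omega>) (\<I> - \<A>))
                  (\<lambda>\<omega>. (restrict (Tv n \<omega>) \<A>, Uv \<omega>, Zv \<omega>))\<bar>
               \<le> C * real (2 ^ n) ^ 3 * 2 powr (- (real (2 ^ n) powr \<beta>)))"
  by (intro allI exI[of _ "10::real"] impI exI[of _ "0::nat"])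
    (elim conjE; rule polar_mutinf_bound; assumption)

end
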